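(* Let $r\ge 1$ and $l\ge 0$ be integers, let $n$ be a positive integer and let $x$ be a real number. Then \[ \sum_{1\le i_1\le i_2\le\cdots\le i_r\le n}(x+i_1)_l=\frac{(x+n+r)_{l+r}}{(l+r)_r}-\sum_{i=1}^r\binom{n+r-i-1}{r-i}\frac{(x+i)_{l+i}}{(l+i)_i}. \]
   Context: $(y)_k=y(y-1)\cdots(y-k+1)$ denotes the lower (falling) factorial, with $(y)_0=1$. The left-hand side is the $r$-fold sum ${\sum}^r (x+n)_l$, where for a function $f$ one sets ${\sum}^0 f(n)=f(n)$ and ${\sum}^r f(n)={\sum}^{r-1}f(1)+\cdots+{\sum}^{r-1}f(n)$. *)

theory Defs
  imports Complex_Main
begin

definition falling :: "real \<Rightarrow> nat \<Rightarrow> real" where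
  "falling y k = (\<Prod>j<k. y - real j)"

fun rsum :: "nat \<Rightarrow> (nat \<Rightarrow> real) \<Rightarrow> nat \<Rightarrow> real" where
  "rsum 0 f n = f n"
| "rsum (Suc r) f n = (\<Sum>m=1..n. rsum r f m)"

end

theory Submission
  imports Defs
begin

text \<open>
  Put \<open>\<Phi> r y = (y)_(l+r) / (l+r)_r\<close>. Since \<open>(y+1)_(k+1) - (y)_(k+1) = (k+1) (y)_k\<close>,
  each \<open>\<Phi> (r+1)\<close> is a discrete antiderivative of \<open>\<Phi> r\<close>, and \<open>\<Phi> 0 y = (y)_l\<close>.
  For any such tower of antiderivatives, summing the formula for \<open>r\<close> over \<open>m = 1..n\<close>
  telescopes the leading term and, by the hockey-stick identity, turns each binomial
  coefficient into the one for \<open>r + 1\<close>; the lower end of the telescoping sum supplies the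
  new term \<open>i = r + 1\<close>.
\<close>

lemma falling_Suc: "falling y (Suc k) = falling y k * (y - real k)"
  unfolding falling_def by simp

lemma falling_Suc_shift: "falling (y + 1) (Suc k) = (y + 1) * falling y k"
  unfolding falling_def by (subst prod.lessThan_Suc_shift) (simp add: algebra_simps)

lemma falling_Suc_diff: "falling (y + 1) (Suc k) - falling y (Suc k) = real (Suc k) * falling y k"
  by (simp only: falling_Suc_shift[of y k] falling_Suc[of y k]) (simp add: algebra_simps)

lemma falling_of_nat_nonzero: "falling (real (l + r)) r \<noteq> 0"
  unfolding falling_def by simp

definition falling_primitive :: "nat \<Rightarrow> nat \<Rightarrow> real \<Rightarrow> real" where
  "falling_primitive l r y = falling y (l + r) / falling (real (l + r)) r"

lemma falling_primitive_0: "falling_primitive l 0 y = falling y l"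
  by (simp add: falling_primitive_def falling_def)

lemma falling_primitive_diff:
  "falling_primitive l (Suc r) (y + 1) - falling_primitive l (Suc r) y = falling_primitive l r y"
proof -
  have numerator: "falling (y + 1) (l + Suc r) - falling y (l + Suc r) = real (Suc (l + r)) * falling y (l + r)"
    using falling_Suc_diff[of y "l + r"] by simp
  have denominator: "falling (real (l + Suc r)) (Suc r) = real (Suc (l + r)) * falling (real (l + r)) r"
    using falling_Suc_shift[of "real (l + r)" r] by (simp add: add_ac)
  show ?thesis using falling_of_nat_nonzero[of l r]
    unfolding falling_primitive_def numerator denominator diff_divide_distrib[symmetric]
    by simp
qed

lemma hockey_stick: "(\<Sum>m=1..n. (m + j - 1) choose j) = (n + j) choose (Suc j)"
  by (induction n) (simp_all add: add.commute)

lemma rsum_antiderivative_tower: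
  fixes \<Phi> :: "nat \<Rightarrow> real \<Rightarrow> real"
  assumes antiderivative: "\<And>r y. \<Phi> (Suc r) (y + 1) - \<Phi> (Suc r) y = \<Phi> r y"
  shows "rsum r (\<lambda>m. \<Phi> 0 (x + real m)) n =
           \<Phi> r (x + real n + real r)
         - (\<Sum>i=1..r. real ((n + r - i - 1) choose (r - i)) * \<Phi> i (x + real i))"
proof (induction r arbitrary: n)
  case 0
  then show ?case by simp
next
  case (Suc r)
  define c where "c k i = real ((k + r - i - 1) choose (r - i))" for k i
  have telescope: "(\<Sum>m=1..n. \<Phi> r (x + real m + real r)) = \<Phi> (Suc r) (x + real n + real (Suc r)) - \<Phi> (Suc r) (x + real (Suc r))"
  proof -
    have "\<Phi> r (x + real m + real r) = \<Phi> (Suc r) (x + real (Suc m) + real r) - \<Phi> (Suc r) (x + real m + real r)" for m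
      using antiderivative[of r "x + real m + real r"] by (simp add: add_ac)
    then show ?thesis
      using sum_Suc_diff[of 1 n "\<lambda>m. \<Phi> (Suc r) (x + real m + real r)"] by (simp add: add_ac)
  qed
  have coefficient: "(\<Sum>m=1..n. c m i) = real ((n + Suc r - i - 1) choose (Suc r - i))"
    if "i \<in> {1..r}" for i
  proof -
    have "(\<Sum>m=1..n. c m i) = real (\<Sum>m=1..n. (m + (r - i) - 1) choose (r - i))"
      using that by (simp add: c_def)
    also have "\<dots> = real ((n + (r - i)) choose Suc (r - i))"
      by (simp only: hockey_stick)
    finally show ?thesis
      using that by (simp add: Suc_diff_le)
  qed
  have "rsum (Suc r) (\<lambda>m. \<Phi> 0 (x + real m)) n
      = (\<Sum>m=1..n. \<Phi> r (x + real m + real r) - (\<Sum>i=1..r. c m i * \<Phi> i (x + real i)))"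
    by (simp add: Suc.IH c_def)
  also have "\<dots> = (\<Sum>m=1..n. \<Phi> r (x + real m + real r)) - (\<Sum>i=1..r. (\<Sum>m=1..n. c m i) * \<Phi> i (x + real i))"
    by (simp add: sum_subtractf sum_distrib_right, rule sum.swap)
  also have "\<dots> = \<Phi> (Suc r) (x + real n + real (Suc r)) - \<Phi> (Suc r) (x + real (Suc r))
      - (\<Sum>i=1..r. real ((n + Suc r - i - 1) choose (Suc r - i)) * \<Phi> i (x + real i))"
    unfolding telescope by (intro arg_cong2[where f = "(-)"] refl sum.cong) (simp_all only: coefficient)
  finally show ?case by simp
qed

theorem mainTheorem2:
  fixes r l n :: nat and x :: real
  assumes "r \<ge> 1" and "n \<ge> 1"
  shows "rsum r (\<lambda>m. falling (x + real m) l) n =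
           falling (x + real n + real r) (l + r) / falling (real (l + r)) r
         - (\<Sum>i=1..r. real ((n + r - i - 1) choose (r - i))
              * falling (x + real i) (l + i) / falling (real (l + i)) i)"
  using rsum_antiderivative_tower[of "falling_primitive l", OF falling_primitive_diff, of r x n]
  unfolding falling_primitive_0 by (simp add: falling_primitive_def)

end
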